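(* Let $d\ge2$, $\mathcal H_S=\mathbb C^d$ with orthonormal basis $\{|k\rangle\}$. For a unit vector $|\psi\rangle\in\mathcal H_S$ define the channel $\mathcal C_\psi(\rho)=|1\rangle\langle1|\,\langle\psi|\rho|\psi\rangle+\frac{I-|1\rangle\langle1|}{d-1}\operatorname{Tr}[(I-|\psi\rangle\langle\psi|)\rho]$. The only basis-preserving channel $\mathcal B$ satisfying $\mathcal B\circ\mathcal C_\psi=\mathcal C_\psi\circ\mathcal B$ for every unit vector $|\psi\rangle$ is the identity channel. Consequently, the commutant (within all quantum channels on $M_d(\mathbb C)$) of the set of maximally incoherent operations, and of the set of incoherent operations, is $\{\mathcal I_S\}$, so the subsystem associated to either set is the whole quantum system.
   Context: A channel $\mathcal B$ is basis-preserving if $\mathcal B(|k\rangle\langle k|)=|k\rangle\langle k|$ for all $k$. Let $\mathcal D(\cdot)=\sum_k|k\rangle\langle k|\cdot|k\rangle\langle k|$. Maximally incoherent operations are channels $\mathcal T$ with $\mathcal T\circ\mathcal D=\mathcal D\circ\mathcal T\circ\mathcal D$. Incoherent operations are channels having a Kraus representation $\{T_i\}$ such that each $\mathcal T_i(\cdot)=T_i\cdot T_i^\dagger$ satisfies $\mathcal T_i\circ\mathcal D=\mathcal D\circ\mathcal T_i\circ\mathcal D$. The commutant of a set of channels is the set of channels commuting under composition with all of its elements. *)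

theory Defs
  imports "HOL-Analysis.Analysis"
begin

text \<open>Operators on C^d are matrices of type complex^'n^'n, with the finite type 'n
  indexing the computational (orthonormal) basis; d = CARD('n).\<close>

type_synonym 'n cmat = "complex^'n^'n"

definition adj :: "'n::finite cmat \<Rightarrow> 'n cmat" where
  "adj A = (\<chi> i j. cnj (A $ j $ i))"

definition mtrace :: "'n::finite cmat \<Rightarrow> complex" where
  "mtrace A = (\<Sum>i\<in>UNIV. A $ i $ i)"

definition proj_basis :: "'n::finite \<Rightarrow> 'n cmat" where
  "proj_basis k = (\<chi> i j. if i = k \<and> j = k then 1 else 0)"

text \<open>Quantum channel: CPTP map, given by a finite Kraus representation.\<close>
definition kraus_rep :: "('n::finite cmat \<Rightarrow> 'n cmat) \<Rightarrow> 'n cmat list \<Rightarrow> bool" where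
  "kraus_rep T Ks \<longleftrightarrow>
     (\<forall>\<rho>. T \<rho> = sum_list (map (\<lambda>K. K ** \<rho> ** adj K) Ks)) \<and>
     sum_list (map (\<lambda>K. adj K ** K) Ks) = mat 1"

definition channel :: "('n::finite cmat \<Rightarrow> 'n cmat) \<Rightarrow> bool" where
  "channel T \<longleftrightarrow> (\<exists>Ks. kraus_rep T Ks)"

definition dephase :: "'n::finite cmat \<Rightarrow> 'n cmat" where
  "dephase \<rho> = (\<chi> i j. if i = j then \<rho> $ i $ i else 0)"

definition basis_preserving :: "('n::finite cmat \<Rightarrow> 'n cmat) \<Rightarrow> bool" where
  "basis_preserving B \<longleftrightarrow> (\<forall>k. B (proj_basis k) = proj_basis k)"

definition MIO :: "('n::finite cmat \<Rightarrow> 'n cmat) set" where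
  "MIO = {T. channel T \<and> T \<circ> dephase = dephase \<circ> T \<circ> dephase}"

definition IO :: "('n::finite cmat \<Rightarrow> 'n cmat) set" where
  "IO = {T. \<exists>Ks. kraus_rep T Ks \<and>
              (\<forall>K\<in>set Ks. (\<lambda>\<rho>. K ** \<rho> ** adj K) \<circ> dephase
                          = dephase \<circ> (\<lambda>\<rho>. K ** \<rho> ** adj K) \<circ> dephase)}"

definition commutant :: "('n::finite cmat \<Rightarrow> 'n cmat) set \<Rightarrow> ('n cmat \<Rightarrow> 'n cmat) set" where
  "commutant S = {T. channel T \<and> (\<forall>E\<in>S. T \<circ> E = E \<circ> T)}"

definition expect :: "complex^'n::finite \<Rightarrow> 'n cmat \<Rightarrow> complex" where
  "expect \<psi> \<rho> = (\<Sum>i\<in>UNIV. \<Sum>j\<in>UNIV. cnj (\<psi> $ i) * \<rho> $ i $ j * \<psi> $ j)"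

text \<open>C_psi(rho) = |1><1| <psi|rho|psi> + (I - |1><1|)/(d-1) Tr[(I - |psi><psi|) rho],
  where e1 is the basis label playing the role of |1>.\<close>
definition C_psi :: "'n::finite \<Rightarrow> complex^'n \<Rightarrow> 'n cmat \<Rightarrow> 'n cmat" where
  "C_psi e1 \<psi> \<rho> =
     (\<chi> i j. proj_basis e1 $ i $ j * expect \<psi> \<rho>
            + ((mat 1 - proj_basis e1) $ i $ j / (of_nat CARD('n) - 1))
              * (mtrace \<rho> - expect \<psi> \<rho>))"

end

theory Submission imports Defs begin

text \<open>A basis-preserving channel fixes every diagonal matrix, and C_psi only outputs
  diagonal matrices. So if B commutes with C_psi, then C_psi (B rho) = B (C_psi rho) = C_psi rho,
  and comparing the (e1, e1) entries gives <psi|B rho|psi> = <psi|rho|psi>; as this holds for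
  every unit psi, polarization yields B rho = rho. For the commutants: every C_psi and every
  replacement channel rho \<mapsto> Tr(rho) |k><k| is incoherent (all Kraus operators have the form
  |j><v|), and a channel commuting with the replacement channels is basis preserving, being
  trace preserving. Since IO \<subseteq> MIO, the commutant of MIO is contained in that of IO.\<close>

lemma sum_list_map_entry:
  "(sum_list (map f xs) :: 'n::finite cmat) $ i $ j = sum_list (map (\<lambda>x. f x $ i $ j) xs)"
  by (induction xs) auto

lemma sum_list_map_sum:
  "sum_list (map (\<lambda>x. \<Sum>a\<in>A. g a x) xs) = (\<Sum>a\<in>A. sum_list (map (g a) xs))"
  by (induction xs) (auto simp: sum.distrib)

lemma sum_list_map_const_mult:
  "sum_list (map (\<lambda>x. (c::complex) * h x) xs) = c * sum_list (map h xs)"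
  by (induction xs) (auto simp: algebra_simps)

lemma sandwich_entry:
  "(K ** \<rho> ** adj K) $ i $ j = (\<Sum>a\<in>UNIV. \<Sum>b\<in>UNIV. K$i$a * \<rho>$a$b * cnj (K$j$b))"
proof -
  have "(K ** \<rho> ** adj K) $ i $ j = (\<Sum>b\<in>UNIV. \<Sum>a\<in>UNIV. K$i$a * \<rho>$a$b * cnj (K$j$b))"
    by (simp add: matrix_matrix_mult_def adj_def sum_distrib_right)
  also have "\<dots> = (\<Sum>a\<in>UNIV. \<Sum>b\<in>UNIV. K$i$a * \<rho>$a$b * cnj (K$j$b))"
    by (rule sum.swap)
  finally show ?thesis .
qed

lemma sum_sum_delta:
  fixes i j :: "'n::finite"
  shows "(\<Sum>a\<in>UNIV. \<Sum>b\<in>UNIV. if a = i \<and> b = j then f a b else (0::complex)) = f i j"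
proof -
  have "(\<Sum>a\<in>UNIV. \<Sum>b\<in>UNIV. if a = i \<and> b = j then f a b else (0::complex))
      = (\<Sum>a\<in>UNIV. if a = i then f a j else 0)"
    by (intro sum.cong refl) auto
  then show ?thesis by simp
qed

lemma sandwich_proj_basis_entry: "(K ** proj_basis a ** adj K) $ i $ j = K$i$a * cnj (K$j$a)"
proof -
  have "(K ** proj_basis a ** adj K) $ i $ j
      = (\<Sum>a'\<in>UNIV. \<Sum>b\<in>UNIV. if a' = a \<and> b = a then K$i$a' * cnj (K$j$b) else 0)"
    unfolding sandwich_entry by (intro sum.cong refl) (simp add: proj_basis_def)
  then show ?thesis by (simp only: sum_sum_delta)
qed

definition outer :: "complex^'n::finite \<Rightarrow> complex^'n \<Rightarrow> 'n cmat" where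
  "outer u v = (\<chi> i j. u$i * cnj (v$j))"

lemma sandwich_outer: "outer u v ** \<rho> ** adj (outer u v) = (\<chi> i j. u$i * cnj (u$j) * expect v \<rho>)"
  by (simp add: vec_eq_iff sandwich_entry outer_def expect_def sum_distrib_left mult_ac)

lemma adj_outer_mult_outer:
  "adj (outer u v) ** outer u v = (\<chi> i j. (\<Sum>a\<in>UNIV. cnj (u$a) * u$a) * v$i * cnj (v$j))"
  by (simp add: vec_eq_iff matrix_matrix_mult_def adj_def outer_def sum_distrib_left
      sum_distrib_right mult_ac)

lemma sum_cnj_axis: "(\<Sum>a\<in>UNIV. cnj (axis j x $ a) * axis j x $ a) = cnj x * x"
  by (simp add: axis_def if_distrib cong: if_cong)

subsection \<open>Basis-preserving channels fix diagonal matrices\<close>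

definition diag_mat :: "('n::finite \<Rightarrow> complex) \<Rightarrow> 'n cmat" where
  "diag_mat f = (\<chi> i j. if i = j then f i else 0)"

lemma sandwich_diag_mat_entry:
  "(K ** diag_mat f ** adj K) $ i $ j = (\<Sum>a\<in>UNIV. f a * (K ** proj_basis a ** adj K) $ i $ j)"
  unfolding sandwich_proj_basis_entry unfolding sandwich_entry
  by (intro sum.cong refl)
    (simp add: diag_mat_def if_distrib[of "\<lambda>y. _ * y"] mult_ac
      cong: if_cong)

lemma kraus_rep_basis_preserving_diag_mat:
  assumes "kraus_rep T Ks" "basis_preserving T"
  shows "T (diag_mat f) = diag_mat f"
proof -
  have "T (diag_mat f) $ i $ j = diag_mat f $ i $ j" for i j
  proof -
    have "T (diag_mat f) $ i $ j = sum_list (map (\<lambda>K. (K ** diag_mat f ** adj K) $ i $ j) Ks)"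
      using assms(1) by (simp add: kraus_rep_def sum_list_map_entry)
    also have "\<dots> = (\<Sum>a\<in>UNIV. f a * sum_list (map (\<lambda>K. (K ** proj_basis a ** adj K) $ i $ j) Ks))"
      by (simp add: sandwich_diag_mat_entry sum_list_map_sum sum_list_map_const_mult)
    also have "\<dots> = (\<Sum>a\<in>UNIV. f a * T (proj_basis a) $ i $ j)"
      using assms(1) by (simp add: kraus_rep_def sum_list_map_entry)
    also have "\<dots> = (\<Sum>a\<in>UNIV. f a * proj_basis a $ i $ j)"
      using assms(2) by (simp add: basis_preserving_def)
    also have "\<dots> = diag_mat f $ i $ j"
      by (cases "i = j") (auto simp: proj_basis_def diag_mat_def if_distrib[of "\<lambda>y. _ * y"]
          intro!: sum.neutral cong: if_cong)
    finally show ?thesis .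
  qed
  then show ?thesis by (simp add: vec_eq_iff)
qed

lemma C_psi_eq_diag_mat:
  "C_psi (e1::'n::finite) \<psi> \<rho> = diag_mat (\<lambda>k. if k = e1 then expect \<psi> \<rho>
     else (mtrace \<rho> - expect \<psi> \<rho>) / (of_nat CARD('n) - 1))"
  by (simp add: vec_eq_iff C_psi_def diag_mat_def proj_basis_def mat_def)

subsection \<open>Polarization\<close>

lemma expect_diff: "expect v (A - B) = expect v A - expect v B"
  by (simp add: expect_def algebra_simps sum_subtractf)

lemma expect_scaleR: "expect ((r::real) *\<^sub>R v) M = complex_of_real (r\<^sup>2) * expect v M"
  unfolding expect_def vector_scaleR_component
  by (simp add: scaleR_conv_of_real sum_distrib_left power2_eq_square mult_ac)

lemma expect_axis: "expect (axis i 1) M = M$i$i"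
proof -
  have "expect (axis i 1) M = (\<Sum>a\<in>UNIV. \<Sum>b\<in>UNIV. if a = i \<and> b = i then M$a$b else 0)"
    unfolding expect_def by (intro sum.cong refl) (auto simp: axis_def)
  then show ?thesis by (simp only: sum_sum_delta)
qed

lemma expect_axis_plus_axis:
  fixes i j :: "'n::finite"
  assumes "i \<noteq> j"
  shows "expect (axis i 1 + axis j c) M = M$i$i + c * M$i$j + cnj c * M$j$i + cnj c * c * M$j$j"
proof -
  have "expect (axis i 1 + axis j c) M
     = (\<Sum>a\<in>UNIV. \<Sum>b\<in>UNIV. (if a = i \<and> b = i then M$a$b else 0)
          + (if a = i \<and> b = j then c * M$a$b else 0)
          + (if a = j \<and> b = i then cnj c * M$a$b else 0)
          + (if a = j \<and> b = j then cnj c * c * M$a$b else 0))"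
    unfolding expect_def by (intro sum.cong refl) (use assms in \<open>auto simp: axis_def\<close>)
  then show ?thesis by (simp only: sum.distrib sum_sum_delta)
qed

text \<open>Testing with e_i, e_i + e_j and e_i + i e_j recovers every entry of M.\<close>

lemma expect_eq_0_imp_eq_0:
  fixes M :: "'n::finite cmat"
  assumes "\<And>v. expect v M = 0"
  shows "M = 0"
proof -
  have diag: "M$i$i = 0" for i
    using assms[of "axis i 1"] by (simp add: expect_axis)
  have "M$i$j = 0" if "i \<noteq> j" for i j
  proof -
    have "M$i$j + M$j$i = 0"
      using assms[of "axis i 1 + axis j 1"] that by (simp add: expect_axis_plus_axis diag)
    moreover have "\<i> * (M$i$j - M$j$i) = 0"
      using assms[of "axis i 1 + axis j \<i>"] that
      by (simp add: expect_axis_plus_axis diag right_diff_distrib)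
    ultimately show ?thesis by simp
  qed
  with diag show ?thesis by (metis vec_eq_iff zero_index)
qed

lemma expect_unit_eq_imp_eq:
  fixes A B :: "'n::finite cmat"
  assumes "\<And>\<psi>. norm \<psi> = 1 \<Longrightarrow> expect \<psi> A = expect \<psi> B"
  shows "A = B"
proof -
  have "expect v (A - B) = 0" for v
  proof (cases "v = 0")
    case True
    then show ?thesis by (simp add: expect_def)
  next
    case False
    then have "norm ((1 / norm v) *\<^sub>R v) = 1" by simp
    from assms[OF this] False show ?thesis by (simp add: expect_scaleR expect_diff)
  qed
  then show ?thesis using expect_eq_0_imp_eq_0[of "A - B"] by simp
qed

lemma basis_preserving_commute_C_psi_eq_id:
  fixes e1 :: "'n::finite"
  assumes "channel B" "basis_preserving B"
    and commute: "\<forall>\<psi>::complex^'n. norm \<psi> = 1 \<longrightarrow> B \<circ> C_psi e1 \<psi> = C_psi e1 \<psi> \<circ> B"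
  shows "B = id"
proof
  fix \<rho> :: "'n cmat"
  obtain Ks where Ks: "kraus_rep B Ks" using assms(1) by (auto simp: channel_def)
  have "expect \<psi> (B \<rho>) = expect \<psi> \<rho>" if "norm \<psi> = 1" for \<psi>
  proof -
    have "C_psi e1 \<psi> (B \<rho>) = B (C_psi e1 \<psi> \<rho>)"
      using commute that by (metis comp_apply)
    also have "\<dots> = C_psi e1 \<psi> \<rho>"
      unfolding C_psi_eq_diag_mat by (rule kraus_rep_basis_preserving_diag_mat[OF Ks assms(2)])
    finally have "C_psi e1 \<psi> (B \<rho>) $ e1 $ e1 = C_psi e1 \<psi> \<rho> $ e1 $ e1" by simp
    then show ?thesis by (simp add: C_psi_def proj_basis_def mat_def)
  qed
  then show "B \<rho> = id \<rho>" by (simp add: expect_unit_eq_imp_eq)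
qed

subsection \<open>Incoherent operations\<close>

lemma channel_id: "channel (id :: 'n::finite cmat \<Rightarrow> 'n cmat)"
proof -
  have "adj (mat 1 :: 'n cmat) = mat 1"
    by (simp add: vec_eq_iff adj_def mat_def)
  then have "kraus_rep id [mat 1 :: 'n cmat]"
    by (simp add: kraus_rep_def matrix_mul_lid matrix_mul_rid)
  then show ?thesis by (auto simp: channel_def)
qed

lemma mtrace_sum_list: "mtrace (sum_list (map f xs)) = sum_list (map (\<lambda>x. mtrace (f x)) xs)"
  by (induction xs) (auto simp: mtrace_def sum.distrib)

lemma sum_list_map_matrix_mult:
  "sum_list (map f xs) ** (\<rho>::'n::finite cmat) = sum_list (map (\<lambda>x. f x ** \<rho>) xs)"
  by (induction xs) (auto simp: vec_eq_iff matrix_matrix_mult_def distrib_right sum.distrib)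

lemma kraus_rep_mtrace:
  assumes "kraus_rep T Ks"
  shows "mtrace (T \<rho>) = mtrace \<rho>"
proof -
  have cyclic: "mtrace (K ** \<rho> ** adj K) = mtrace (adj K ** K ** \<rho>)" for K
    using trace_mul_sym[of "K ** \<rho>" "adj K"]
    by (simp add: mtrace_def trace_def matrix_mul_assoc)
  have "mtrace (T \<rho>) = sum_list (map (\<lambda>K. mtrace (adj K ** K ** \<rho>)) Ks)"
    using assms by (simp add: kraus_rep_def mtrace_sum_list cyclic)
  also have "\<dots> = mtrace (sum_list (map (\<lambda>K. adj K ** K) Ks) ** \<rho>)"
    by (simp add: sum_list_map_matrix_mult mtrace_sum_list)
  also have "\<dots> = mtrace \<rho>"
    using assms by (simp add: kraus_rep_def matrix_mul_lid)
  finally show ?thesis .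
qed

lemma dephase_sum_list: "dephase (sum_list (map f xs)) = sum_list (map (\<lambda>x. dephase (f x)) xs)"
  by (auto simp: vec_eq_iff dephase_def sum_list_map_entry)

lemma IO_subset_MIO: "IO \<subseteq> MIO"
proof
  fix T :: "'n::finite cmat \<Rightarrow> 'n cmat"
  assume "T \<in> IO"
  then obtain Ks where Ks: "kraus_rep T Ks"
    and incoherent: "\<forall>K\<in>set Ks. (\<lambda>\<rho>. K ** \<rho> ** adj K) \<circ> dephase
                          = dephase \<circ> (\<lambda>\<rho>. K ** \<rho> ** adj K) \<circ> dephase"
    by (auto simp: IO_def)
  have "T (dephase \<rho>) = dephase (T (dephase \<rho>))" for \<rho>
  proof -
    have "T (dephase \<rho>) = sum_list (map (\<lambda>K. K ** dephase \<rho> ** adj K) Ks)"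
      using Ks by (simp add: kraus_rep_def)
    also have "\<dots> = sum_list (map (\<lambda>K. dephase (K ** dephase \<rho> ** adj K)) Ks)"
      using incoherent by (intro arg_cong[where f=sum_list] map_cong) (auto simp: fun_eq_iff)
    also have "\<dots> = dephase (T (dephase \<rho>))"
      using Ks by (simp add: kraus_rep_def dephase_sum_list)
    finally show ?thesis .
  qed
  then show "T \<in> MIO" using Ks by (auto simp: MIO_def channel_def fun_eq_iff)
qed

text \<open>If u is supported on a single basis vector, |u><v| rho |v><u| is a multiple of a
  diagonal matrix unit for every rho.\<close>

lemma outer_sandwich_incoherent:
  assumes "\<forall>a. a \<noteq> j \<longrightarrow> u$a = 0"
  shows "(\<lambda>\<rho>. outer u v ** \<rho> ** adj (outer u v)) \<circ> dephase
       = dephase \<circ> (\<lambda>\<rho>. outer u v ** \<rho> ** adj (outer u v)) \<circ> dephase"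
  using assms by (auto simp: fun_eq_iff sandwich_outer dephase_def vec_eq_iff; metis)

lemma outer_Kraus_IO:
  fixes I :: "'i set" and u v :: "'i \<Rightarrow> complex^'n::finite"
  assumes "finite I"
    and T: "\<And>\<rho>. T \<rho> = (\<Sum>x\<in>I. outer (u x) (v x) ** \<rho> ** adj (outer (u x) (v x)))"
    and complete: "(\<Sum>x\<in>I. adj (outer (u x) (v x)) ** outer (u x) (v x)) = mat 1"
    and support: "\<And>x. x \<in> I \<Longrightarrow> \<exists>j. \<forall>a. a \<noteq> j \<longrightarrow> u x $ a = 0"
  shows "T \<in> IO"
proof -
  obtain xs where xs: "set xs = I" "distinct xs"
    using finite_distinct_list[OF \<open>finite I\<close>] by auto
  define Ks where "Ks = map (\<lambda>x. outer (u x) (v x)) xs"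
  have "kraus_rep T Ks"
    using T complete xs by (simp add: kraus_rep_def Ks_def o_def sum_list_distinct_conv_sum_set)
  moreover have "(\<lambda>\<rho>. K ** \<rho> ** adj K) \<circ> dephase
      = dephase \<circ> (\<lambda>\<rho>. K ** \<rho> ** adj K) \<circ> dephase"
    if "K \<in> set Ks" for K
  proof -
    from that xs obtain x where "x \<in> I" "K = outer (u x) (v x)" by (auto simp: Ks_def)
    with support show ?thesis
      using outer_sandwich_incoherent by blast
  qed
  ultimately show ?thesis by (auto simp: IO_def)
qed

definition replace_basis :: "'n::finite \<Rightarrow> 'n cmat \<Rightarrow> 'n cmat" where
  "replace_basis k \<rho> = (\<chi> i j. proj_basis k $ i $ j * mtrace \<rho>)"

lemma replace_basis_IO: "replace_basis k \<in> IO"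
proof (rule outer_Kraus_IO[where I=UNIV and u="\<lambda>l. axis k 1" and v="\<lambda>l. axis l 1"])
  show "replace_basis k \<rho>
      = (\<Sum>l\<in>UNIV. outer (axis k 1) (axis l 1) ** \<rho> ** adj (outer (axis k 1) (axis l 1)))"
    for \<rho>
    by (simp add: vec_eq_iff sandwich_outer sum_component expect_axis replace_basis_def
        mtrace_def sum_distrib_left[symmetric]) (simp add: axis_def proj_basis_def)
  show "(\<Sum>l\<in>UNIV. adj (outer (axis k 1) (axis l 1)) ** outer (axis k 1) (axis l 1)) = mat 1"
    by (simp add: vec_eq_iff adj_outer_mult_outer sum_component sum_cnj_axis mat_def)
      (simp add: axis_def if_distrib[of cnj] if_distrib[of "\<lambda>y. _ * y"] cong: if_cong)
qed (auto simp: axis_def)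

lemma sum_expect:
  "(\<Sum>x\<in>I. expect (v x) \<rho>) = (\<Sum>a\<in>UNIV. \<Sum>b\<in>UNIV. \<rho>$a$b * (\<Sum>x\<in>I. cnj (v x $ a) * v x $ b))"
proof -
  have "(\<Sum>x\<in>I. expect (v x) \<rho>) = (\<Sum>x\<in>I. \<Sum>a\<in>UNIV. \<Sum>b\<in>UNIV. \<rho>$a$b * (cnj (v x $ a) * v x $ b))"
    unfolding expect_def by (simp add: mult_ac)
  also have "\<dots> = (\<Sum>a\<in>UNIV. \<Sum>b\<in>UNIV. \<Sum>x\<in>I. \<rho>$a$b * (cnj (v x $ a) * v x $ b))"
    by (simp only: sum.swap[of _ I])
  finally show ?thesis by (simp add: sum_distrib_left)
qed

lemma sum_cnj_mult_self_eq_1: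
  fixes \<psi> :: "complex^'n::finite"
  assumes "norm \<psi> = 1"
  shows "(\<Sum>l\<in>UNIV. cnj (\<psi>$l) * \<psi>$l) = 1"
proof -
  have "(\<Sum>l\<in>UNIV. (norm (\<psi>$l))\<^sup>2) = 1"
    using assms by (simp add: norm_vec_def L2_set_def)
  then have "(\<Sum>l\<in>UNIV. complex_of_real ((norm (\<psi>$l))\<^sup>2)) = 1"
    by (metis of_real_1 of_real_sum)
  moreover have "cnj (\<psi>$l) * \<psi>$l = complex_of_real ((norm (\<psi>$l))\<^sup>2)" for l
    by (metis complex_norm_square mult.commute)
  ultimately show ?thesis by simp
qed

text \<open>Column l of the projector I - |psi><psi|; these columns are Kraus vectors for the
  functional rho \<mapsto> Tr[(I - |psi><psi|) rho].\<close>

definition perp_vec :: "complex^'n::finite \<Rightarrow> 'n \<Rightarrow> complex^'n" where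
  "perp_vec \<psi> l = (\<chi> a. (if a = l then 1 else 0) - cnj (\<psi>$l) * \<psi>$a)"

lemma sum_perp_vec_outer:
  fixes \<psi> :: "complex^'n::finite"
  assumes "norm \<psi> = 1"
  shows "(\<Sum>l\<in>UNIV. perp_vec \<psi> l $ a * cnj (perp_vec \<psi> l $ b))
    = (if a = b then 1 else 0) - \<psi>$a * cnj (\<psi>$b)"
proof -
  have "(\<Sum>l\<in>UNIV. perp_vec \<psi> l $ a * cnj (perp_vec \<psi> l $ b))
     = (\<Sum>l\<in>UNIV. (if a = l then 1 else 0) * (if b = l then 1 else 0)
          - (if a = l then 1 else 0) * (\<psi>$l * cnj (\<psi>$b))
          - (if b = l then 1 else 0) * (cnj (\<psi>$l) * \<psi>$a)
          + (\<psi>$a * cnj (\<psi>$b)) * (cnj (\<psi>$l) * \<psi>$l))"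
    by (intro sum.cong refl) (simp add: perp_vec_def algebra_simps)
  also have "\<dots> = (if a = b then 1 else 0) - \<psi>$a * cnj (\<psi>$b) - \<psi>$a * cnj (\<psi>$b)
          + (\<psi>$a * cnj (\<psi>$b)) * (\<Sum>l\<in>UNIV. cnj (\<psi>$l) * \<psi>$l)"
    by (simp add: sum.distrib sum_subtractf sum_distrib_left[symmetric] if_distrib[of "\<lambda>y. y * _"]
        cong: if_cong)
  finally show ?thesis
    using sum_cnj_mult_self_eq_1[OF assms] by simp
qed

lemma sum_expect_perp_vec:
  fixes \<psi> :: "complex^'n::finite"
  assumes "norm \<psi> = 1"
  shows "(\<Sum>l\<in>UNIV. expect (perp_vec \<psi> l) \<rho>) = mtrace \<rho> - expect \<psi> \<rho>"
proof -
  have conj: "(\<Sum>l\<in>UNIV. cnj (perp_vec \<psi> l $ a) * perp_vec \<psi> l $ b)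
      = (if a = b then 1 else 0) - cnj (\<psi>$a) * \<psi>$b" for a b
    using arg_cong[OF sum_perp_vec_outer[OF assms, of a b], of cnj] by simp
  have "(\<Sum>l\<in>UNIV. expect (perp_vec \<psi> l) \<rho>)
      = (\<Sum>a\<in>UNIV. \<Sum>b\<in>UNIV. (if a = b then \<rho>$a$b else 0) - cnj (\<psi>$a) * \<rho>$a$b * \<psi>$b)"
    unfolding sum_expect conj by (intro sum.cong refl) (simp add: algebra_simps)
  also have "\<dots> = mtrace \<rho> - expect \<psi> \<rho>"
    by (simp add: sum_subtractf mtrace_def expect_def)
  finally show ?thesis .
qed

lemma cnj_mult_self_inverse_sqrt:
  assumes "d \<ge> 2"
  defines "c \<equiv> complex_of_real (1 / sqrt (real d - 1))"
  shows "cnj c * c = 1 / (of_nat d - 1)"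
proof -
  have "cnj c * c = complex_of_real ((1 / sqrt (real d - 1))\<^sup>2)"
    unfolding c_def
    by (simp only: complex_cnj_complex_of_real of_real_mult[symmetric] power2_eq_square)
  also have "\<dots> = complex_of_real (1 / (real d - 1))"
    using assms(1) by (simp add: power_divide)
  also have "\<dots> = 1 / (of_nat d - 1)"
    by simp
  finally show ?thesis .
qed

text \<open>Kraus operators for C_psi: |e1><psi| and c |j><w_l| for j \<noteq> e1 and all l,
  where w_l is the l-th column of I - |psi><psi| and |c|^2 = 1/(d - 1).\<close>

lemma C_psi_Kraus_sum:
  fixes e1 :: "'n::finite"
  assumes unit: "norm \<psi> = 1" and c_sq: "cnj c * c = 1 / (of_nat CARD('n) - 1)"
  shows "C_psi e1 \<psi> \<rho> = outer (axis e1 1) \<psi> ** \<rho> ** adj (outer (axis e1 1) \<psi>)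
    + (\<Sum>j\<in>UNIV - {e1}. \<Sum>l\<in>UNIV.
        outer (axis j c) (perp_vec \<psi> l) ** \<rho> ** adj (outer (axis j c) (perp_vec \<psi> l)))"
proof -
  have axis_outer_sum: "(\<Sum>j\<in>UNIV - {e1}. axis j c $ i * cnj (axis j c $ i'))
      = (if i = i' \<and> i \<noteq> e1 then cnj c * c else 0)" for i i'
    by (simp add: axis_def if_distrib[of "\<lambda>y. y * _"] mult.commute cong: if_cong)
  have "(outer (axis e1 1) \<psi> ** \<rho> ** adj (outer (axis e1 1) \<psi>)
    + (\<Sum>j\<in>UNIV - {e1}. \<Sum>l\<in>UNIV.
        outer (axis j c) (perp_vec \<psi> l) ** \<rho> ** adj (outer (axis j c) (perp_vec \<psi> l)))) $ i $ i'
      = proj_basis e1 $ i $ i' * expect \<psi> \<rho>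
        + (\<Sum>j\<in>UNIV - {e1}. axis j c $ i * cnj (axis j c $ i'))
          * (\<Sum>l\<in>UNIV. expect (perp_vec \<psi> l) \<rho>)" for i i'
  proof -
    have "axis e1 1 $ i * cnj (axis e1 1 $ i') = proj_basis e1 $ i $ i'"
      by (simp add: axis_def proj_basis_def)
    then show ?thesis
      by (simp add: sum_component sandwich_outer sum_distrib_left[symmetric]
          sum_distrib_right[symmetric])
  qed
  then show ?thesis
    by (simp add: vec_eq_iff sum_expect_perp_vec[OF unit] axis_outer_sum c_sq C_psi_def
        proj_basis_def mat_def)
qed

lemma C_psi_Kraus_complete:
  fixes e1 :: "'n::finite"
  assumes "CARD('n) \<ge> 2" and unit: "norm \<psi> = 1"
    and c_sq: "cnj c * c = 1 / (of_nat CARD('n) - 1)"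
  shows "adj (outer (axis e1 1) \<psi>) ** outer (axis e1 1) \<psi>
    + (\<Sum>j\<in>UNIV - {e1}. \<Sum>l\<in>UNIV.
        adj (outer (axis j c) (perp_vec \<psi> l)) ** outer (axis j c) (perp_vec \<psi> l)) = mat 1"
proof -
  have "(of_nat CARD('n) - 1 :: complex) \<noteq> 0"
  proof
    assume "(of_nat CARD('n) - 1 :: complex) = 0"
    then have "complex_of_real (real CARD('n) - 1) = 0" by simp
    with assms(1) show False by simp
  qed
  have "(adj (outer (axis e1 1) \<psi>) ** outer (axis e1 1) \<psi>
    + (\<Sum>j\<in>UNIV - {e1}. \<Sum>l\<in>UNIV.
        adj (outer (axis j c) (perp_vec \<psi> l)) ** outer (axis j c) (perp_vec \<psi> l))) $ i $ i'
      = mat 1 $ i $ i'" for i i'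
  proof -
    have "(adj (outer (axis e1 1) \<psi>) ** outer (axis e1 1) \<psi>
      + (\<Sum>j\<in>UNIV - {e1}. \<Sum>l\<in>UNIV.
          adj (outer (axis j c) (perp_vec \<psi> l)) ** outer (axis j c) (perp_vec \<psi> l))) $ i $ i'
        = \<psi>$i * cnj (\<psi>$i') + (of_nat CARD('n) - 1)
          * (cnj c * c * (\<Sum>l\<in>UNIV. perp_vec \<psi> l $ i * cnj (perp_vec \<psi> l $ i')))"
      by (simp add: adj_outer_mult_outer sum_cnj_axis)
        (simp add: sum_distrib_left[symmetric] mult.assoc of_nat_index)
    also have "\<dots> = mat 1 $ i $ i'"
      using \<open>(of_nat CARD('n) - 1 :: complex) \<noteq> 0\<close>
      by (simp add: sum_perp_vec_outer[OF unit] c_sq mat_def)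
    finally show ?thesis .
  qed
  then show ?thesis by (simp add: vec_eq_iff)
qed

lemma sum_insert_None_image_Some:
  assumes "finite S"
  shows "(\<Sum>x\<in>insert None (Some ` S). F x) = F None + (\<Sum>y\<in>S. F (Some y))"
  using assms by (simp add: sum.reindex)

lemma C_psi_IO:
  fixes e1 :: "'n::finite" and \<psi> :: "complex^'n"
  assumes "CARD('n) \<ge> 2" and unit: "norm \<psi> = 1"
  shows "C_psi e1 \<psi> \<in> IO"
proof -
  define c where "c = complex_of_real (1 / sqrt (real CARD('n) - 1))"
  have c_sq: "cnj c * c = 1 / (of_nat CARD('n) - 1)"
    unfolding c_def using assms(1) by (rule cnj_mult_self_inverse_sqrt)
  define u :: "('n \<times> 'n) option \<Rightarrow> complex^'n"
    where "u = case_option (axis e1 1) (\<lambda>(j, l). axis j c)"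
  define v :: "('n \<times> 'n) option \<Rightarrow> complex^'n"
    where "v = case_option \<psi> (\<lambda>(j, l). perp_vec \<psi> l)"
  have sum_I: "(\<Sum>x\<in>insert None (Some ` ((UNIV - {e1}) \<times> UNIV)). F x)
      = F None + (\<Sum>j\<in>UNIV - {e1}. \<Sum>l\<in>UNIV. F (Some (j, l)))"
    for F :: "('n \<times> 'n) option \<Rightarrow> 'n cmat"
    by (subst sum_insert_None_image_Some) (auto simp: sum.cartesian_product)
  show ?thesis
    by (rule outer_Kraus_IO[where I="insert None (Some ` ((UNIV - {e1}) \<times> UNIV))"
          and u=u and v=v])
      (simp_all add: sum_I u_def v_def C_psi_Kraus_sum[OF unit c_sq]
        C_psi_Kraus_complete[OF assms c_sq], auto simp: axis_def)
qed

lemma commutant_IO_subset_id: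
  assumes "CARD('n::finite) \<ge> 2"
  shows "commutant (IO :: ('n cmat \<Rightarrow> 'n cmat) set) \<subseteq> {id}"
proof
  fix B :: "'n cmat \<Rightarrow> 'n cmat"
  assume "B \<in> commutant IO"
  then have B: "channel B" and commute: "\<And>E. E \<in> IO \<Longrightarrow> B \<circ> E = E \<circ> B"
    by (auto simp: commutant_def)
  obtain Ks where Ks: "kraus_rep B Ks" using B by (auto simp: channel_def)
  have "B (proj_basis k) = proj_basis k" for k
  proof -
    have "mtrace (proj_basis k) = 1"
      by (simp add: mtrace_def proj_basis_def)
    moreover have "B (replace_basis k (proj_basis k)) = replace_basis k (B (proj_basis k))"
      using commute[OF replace_basis_IO] by (metis comp_apply)
    ultimately show ?thesis
      by (simp add: replace_basis_def kraus_rep_mtrace[OF Ks] vec_eq_iff)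
  qed
  then have "basis_preserving B"
    by (simp add: basis_preserving_def)
  with B commute C_psi_IO[OF assms] show "B \<in> {id}"
    using basis_preserving_commute_C_psi_eq_id by blast
qed

lemma id_in_commutant: "id \<in> commutant S"
  by (simp add: commutant_def channel_id)

theorem mainTheorem11:
  fixes e1 :: "'n::finite"
  assumes "CARD('n) \<ge> 2"
  shows "{B :: 'n cmat \<Rightarrow> 'n cmat. channel B \<and> basis_preserving B \<and>
            (\<forall>\<psi>::complex^'n. norm \<psi> = 1 \<longrightarrow> B \<circ> C_psi e1 \<psi> = C_psi e1 \<psi> \<circ> B)} = {id}
         \<and> commutant (MIO :: ('n cmat \<Rightarrow> 'n cmat) set) = {id}
         \<and> commutant (IO :: ('n cmat \<Rightarrow> 'n cmat) set) = {id}"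
proof -
  have IO: "commutant (IO :: ('n cmat \<Rightarrow> 'n cmat) set) = {id}"
    using commutant_IO_subset_id[OF assms] id_in_commutant by blast
  have "commutant (MIO :: ('n cmat \<Rightarrow> 'n cmat) set) \<subseteq> commutant IO"
    using IO_subset_MIO by (auto simp: commutant_def)
  with IO have MIO: "commutant (MIO :: ('n cmat \<Rightarrow> 'n cmat) set) = {id}"
    using id_in_commutant by blast
  show ?thesis
    using IO MIO basis_preserving_commute_C_psi_eq_id
    by (auto simp: channel_id basis_preserving_def)
qed

end
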